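(* Let $n_1,n_2,m_1,m_2$ be integers with $n_i\ge2$ and $0\le m_i\le n_i(n_i-1)$ for $i\in\{1,2\}$, and let $q_i$ and $r_i$ be the quotient and remainder of $m_i$ divided by $n_i$. If $n_1\le n_2$, $q_1\le q_2$ and $n_1-r_1\ge n_2-r_2$, then $\mathbb G(n_1,m_1)$ is a subgraph of $\mathbb G(n_2,m_2)$ (with vertex set $\{1,\dots,n_1\}\subseteq\{1,\dots,n_2\}$ and every arc of $\mathbb G(n_1,m_1)$ an arc of $\mathbb G(n_2,m_2)$).
   Context: For integers $n\ge2$ and $0\le m\le n(n-1)$, $\mathbb G(n,m)$ is the simple directed graph on vertex set $\{1,\dots,n\}$ whose arc set is $\{(\lceil \frac{i}{n-1}\rceil,\ n-((i-1)\bmod n)) : i=1,\dots,m\}$, where an arc $(j,k)$ goes from $j$ to $k$ and $a\bmod b\in\{0,\dots,b-1\}$; these $m$ pairs are pairwise distinct pairs of distinct vertices. *)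

theory Defs
  imports Complex_Main
begin

definition G_verts :: "nat \<Rightarrow> nat set" where
  "G_verts n = {1..n}"

definition G_arcs :: "nat \<Rightarrow> nat \<Rightarrow> (nat \<times> nat) set" where
  "G_arcs n m = {(nat \<lceil>real i / real (n - 1)\<rceil>, n - ((i - 1) mod n)) | i. i \<in> {1..m}}"

end

theory Submission
  imports Defs
begin

(* Number the arcs of G(n,m) from 0 in the order of the paper's list.  For n >= 2 the first
   n(n-1) positions enumerate every loopless pair (j,t) exactly once, and (j,t) sits at
   position c*n + (n - t), where c = arc_block j t does not depend on n.  So (j,t) is an arc
   of G(n, q*n + r) iff (c, n - t) is lexicographically below (q, r), and the hypotheses
   q1 <= q2 and n1 - r1 >= n2 - r2 carry this condition from (n1,m1) over to (n2,m2). *)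

definition arc :: "nat \<Rightarrow> nat \<Rightarrow> nat \<times> nat" where
  "arc n k = (k div (n - 1) + 1, n - k mod n)"

definition arc_block :: "nat \<Rightarrow> nat \<Rightarrow> nat" where
  "arc_block j t = (if j < t then j - 1 else j - 2)"

definition arc_index :: "nat \<Rightarrow> nat \<Rightarrow> nat \<Rightarrow> nat" where
  "arc_index n j t = arc_block j t * n + (n - t)"

lemma nat_ceiling_Suc_divide:
  assumes "0 < d"
  shows "nat \<lceil>real (Suc k) / real d\<rceil> = k div d + 1"
proof -
  have "real (k div d * d) < real (Suc k)"
    using div_times_less_eq_dividend[of k d] by linarith
  moreover have "real (Suc k) \<le> real (d + k div d * d)"
    using dividend_less_div_times[OF assms, of k] by linarith
  ultimately have "\<lceil>real (Suc k) / real d\<rceil> = int (k div d) + 1"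
    using assms by (simp add: ceiling_eq_iff field_simps)
  then show ?thesis by simp
qed

lemma G_arcs_eq_image:
  assumes "2 \<le> n"
  shows "G_arcs n m = arc n ` {..<m}"
proof -
  have arc_eq: "(nat \<lceil>real i / real (n - 1)\<rceil>, n - (i - 1) mod n) = arc n (i - 1)"
    if "1 \<le> i" for i
    using that assms nat_ceiling_Suc_divide[of "n - 1" "i - 1"] by (simp add: arc_def)
  have "G_arcs n m = arc n ` (\<lambda>i. i - 1) ` {1..m}"
    unfolding G_arcs_def Setcompr_eq_image image_image by (intro image_cong refl arc_eq) simp
  also have "(\<lambda>i. i - 1) ` {1..m} = {..<m}"
    by (auto simp: image_iff intro!: bexI[of _ "Suc _"])
  finally show ?thesis .
qed

lemma arc_arc_index:
  assumes "2 \<le> n" and "j \<in> {1..n}" and "t \<in> {1..n}" and "t \<noteq> j"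
  shows "arc n (arc_index n j t) = (j, t)"
proof -
  obtain d where n: "n = Suc d"
    using assms(1) by (cases n) auto
  obtain p where j: "j = Suc p"
    using assms(2) by (cases j) auto
  have "n - t < n"
    using assms(3) by (simp add: n)
  then have "arc_index n j t mod n = n - t"
    unfolding arc_index_def by (metis mod_mult_self3 mod_less)
  moreover have "arc_index n j t div d = p"
  proof (cases "j < t")
    case True
    then have "arc_index n j t = p * d + (p + n - t)"
      using assms(3) by (simp add: arc_index_def arc_block_def j n algebra_simps)
    moreover have "p + n - t < d"
      using True assms(3) by (simp add: j n)
    ultimately show ?thesis
      by (simp add: div_nat_eqI)
  next
    case False
    then obtain p' where p: "p = Suc p'" and "t < j"
      using assms by (cases p) (auto simp: j)
    then have "arc_index n j t = p * d + (p - t)"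
      using assms by (simp add: arc_index_def arc_block_def j n algebra_simps)
    moreover have "p - t < d"
      using \<open>t < j\<close> assms by (simp add: j n)
    ultimately show ?thesis
      by (simp add: div_nat_eqI)
  qed
  ultimately show ?thesis
    using assms(3) by (simp add: arc_def j n)
qed

lemma arc_index_arc:
  assumes "2 \<le> n" and "k < n * (n - 1)" and "arc n k = (j, t)"
  shows "j \<in> {1..n}" and "t \<in> {1..n}" and "t \<noteq> j" and "arc_index n j t = k"
proof -
  obtain d where n: "n = Suc d" and "1 \<le> d"
    using assms(1) by (cases n) auto
  define p where "p = k div d"
  define s where "s = k mod d"
  have k: "k = p * n + s - p" and "s < d"
    using \<open>1 \<le> d\<close> by (simp_all add: p_def s_def n)
  have "p < n"
    using assms(2) \<open>1 \<le> d\<close> by (simp add: p_def n div_less_iff_less_mult)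
  have j: "j = Suc p" and t: "t = n - k mod n"
    using assms(3) by (simp_all add: arc_def p_def n)
  have "1 \<le> t \<and> t \<noteq> j \<and> arc_index n j t = k"
  proof (cases "p \<le> s")
    case True
    then have "k = p * n + (s - p)" and "s - p < n"
      using k \<open>s < d\<close> by (simp_all add: n)
    then have "k mod n = s - p"
      by (metis mod_mult_self3 mod_less)
    then have "j < t" and "n - t = s - p"
      using True \<open>s < d\<close> by (simp_all add: t j n)
    then show ?thesis
      using \<open>k = p * n + (s - p)\<close> by (simp add: t j arc_index_def arc_block_def)
  next
    case False
    then obtain p' where p: "p = Suc p'"
      by (cases p) auto
    then have "k = p' * n + (n + s - p)" and "n + s - p < n"
      using k False \<open>p < n\<close> by (simp_all add: n)
    then have "k mod n = n + s - p"
      by (metis mod_mult_self3 mod_less)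
    then have "1 \<le> t" and "t < j" and "n - t = n + s - p"
      using False \<open>p < n\<close> by (simp_all add: t j)
    then show ?thesis
      using \<open>k = p' * n + (n + s - p)\<close> by (simp add: j p arc_index_def arc_block_def)
  qed
  then show "t \<in> {1..n}" and "t \<noteq> j" and "arc_index n j t = k"
    by (simp_all add: t)
  show "j \<in> {1..n}"
    using \<open>p < n\<close> by (simp add: j)
qed

lemma mult_add_less_iff:
  fixes x a m n :: nat
  assumes "a < n"
  shows "x * n + a < m \<longleftrightarrow> x < m div n \<or> x = m div n \<and> a < m mod n"
proof
  assume less: "x * n + a < m"
  have "x = (x * n + a) div n"
    using assms by simp
  also have "\<dots> \<le> m div n"
    using less by (simp add: div_le_mono)
  finally have "x \<le> m div n" .
  moreover have "a < m mod n" if "x = m div n"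
    using less that by (metis div_mult_mod_eq nat_add_left_cancel_less)
  ultimately show "x < m div n \<or> x = m div n \<and> a < m mod n"
    by auto
next
  assume "x < m div n \<or> x = m div n \<and> a < m mod n"
  then show "x * n + a < m"
  proof
    assume "x < m div n"
    then have "x * n + a < Suc x * n"
      using assms by simp
    also have "\<dots> \<le> m div n * n"
      using \<open>x < m div n\<close> by (intro mult_le_mono1) simp
    also have "\<dots> \<le> m"
      by simp
    finally show ?thesis .
  qed (metis div_mult_mod_eq nat_add_left_cancel_less)
qed

lemma arc_index_less_iff:
  assumes "t \<in> {1..n}"
  shows "arc_index n j t < m \<longleftrightarrow>
    arc_block j t < m div n \<or> arc_block j t = m div n \<and> n - t < m mod n"
  unfolding arc_index_def using assms by (intro mult_add_less_iff) auto

lemma arc_index_less_mono: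
  assumes "t \<in> {1..n1}" and "n1 \<le> n2" and "m1 div n1 \<le> m2 div n2"
    and "int n1 - int (m1 mod n1) \<ge> int n2 - int (m2 mod n2)"
    and "arc_index n1 j t < m1"
  shows "arc_index n2 j t < m2"
proof -
  have "arc_block j t < m1 div n1 \<or> arc_block j t = m1 div n1 \<and> n1 - t < m1 mod n1"
    using assms(1,5) arc_index_less_iff by blast
  then have "arc_block j t < m2 div n2 \<or> arc_block j t = m2 div n2 \<and> n2 - t < m2 mod n2"
    using assms(1-4) by auto
  then show ?thesis
    using assms(1,2) arc_index_less_iff by simp
qed

theorem corollary2:
  fixes n1 n2 m1 m2 :: nat
  assumes "n1 \<ge> 2" and "n2 \<ge> 2"
    and "m1 \<le> n1 * (n1 - 1)" and "m2 \<le> n2 * (n2 - 1)"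
    and "n1 \<le> n2"
    and "m1 div n1 \<le> m2 div n2"
    and "int n1 - int (m1 mod n1) \<ge> int n2 - int (m2 mod n2)"
  shows "G_verts n1 \<subseteq> G_verts n2 \<and> G_arcs n1 m1 \<subseteq> G_arcs n2 m2"
proof
  show "G_verts n1 \<subseteq> G_verts n2"
    using assms(5) by (simp add: G_verts_def)
  show "G_arcs n1 m1 \<subseteq> G_arcs n2 m2"
  proof
    fix e
    assume "e \<in> G_arcs n1 m1"
    then obtain k j t where "k < m1" and e: "e = (j, t)" and "arc n1 k = (j, t)"
      using G_arcs_eq_image[OF assms(1)] by (metis imageE lessThan_iff surj_pair)
    then have "j \<in> {1..n1}" and "t \<in> {1..n1}" and "t \<noteq> j" and "arc_index n1 j t < m1"
      using arc_index_arc[OF assms(1)] assms(3) by (metis order_less_le_trans)+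
    then have "arc_index n2 j t < m2"
      using arc_index_less_mono assms(5-7) by blast
    moreover have "arc n2 (arc_index n2 j t) = (j, t)"
      using arc_arc_index assms(2,5) \<open>j \<in> {1..n1}\<close> \<open>t \<in> {1..n1}\<close> \<open>t \<noteq> j\<close> by auto
    ultimately show "e \<in> G_arcs n2 m2"
      using G_arcs_eq_image[OF assms(2)] e by (metis imageI lessThan_iff)
  qed
qed

end
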